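(* Semi-stable semantics is not serialisable: there is no selection function $\alpha$ and termination function $\beta$ such that $\mathrm{sst}(F)=\mathcal{E}^{\alpha,\beta}(F)$ for every abstract argumentation framework $F$.
   Context: An abstract argumentation framework (AF) is a pair $F=(A,R)$ with $A$ a finite subset of a fixed universal set of arguments $\mathfrak{A}$ and $R\subseteq A\times A$ ($a\to b$ means $(a,b)\in R$). For $S\subseteq A$: $S^+=\{a\mid \exists b\in S: b\to a\}$, $S^-=\{a\mid\exists b\in S: a\to b\}$; for sets $S,S'$, $S\to S'$ means $S^+\cap S'\neq\emptyset$. $S$ is admissible if it is conflict-free and every attacker of an element of $S$ is attacked by some element of $S$. A semi-stable extension is an admissible set $E$ such that $E\cup E^+$ is inclusion-maximal among all sets $E'\cup E'^+$ with $E'$ admissible; $\mathrm{sst}(F)$ is the set of semi-stable extensions. An initial set is a non-empty admissible set with no non-empty admissible proper subset; $\mathrm{IS}(F)$ is the set of initial sets. An initial set $S$ is unattacked if $S^-=\emptyset$; unchallenged if $S^-\neq\emptyset$ and no $S'\in\mathrm{IS}(F)$ has $S'\to S$; challenged if some $S'\in\mathrm{IS}(F)$ has $S'\to S$. Write $\mathrm{IS}^{u}(F),\mathrm{IS}^{uc}(F),\mathrm{IS}^{c}(F)$ for these sets. The reduct is $F^S=(A',R\cap(A'\times A'))$ with $A'=A\setminus(S\cup S^+)$. A selection function $\alpha$ maps any three sets $X,Y,Z$ of sets of arguments to a subset of $X\cup Y\cup Z$; a termination function $\beta$ maps pairs $(F,S)$ to $\{0,1\}$. Transitions: $(F,S)\to(F^{S'},S\cup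 S')$ whenever $S'\in\alpha(\mathrm{IS}^u(F),\mathrm{IS}^{uc}(F),\mathrm{IS}^c(F))$. $(F,S)\leadsto^{\alpha,\beta}(F',S')$ means $(F',S')$ is reachable from $(F,S)$ in finitely many (possibly zero) transitions and $\beta(F',S')=1$. $\mathcal{E}^{\alpha,\beta}(F)$ is the set of all $S$ with $(F,\emptyset)\leadsto^{\alpha,\beta}(F',S)$ for some $F'$. A semantics $\sigma$ is serialisable if there exist $\alpha,\beta$ with $\sigma(F)=\mathcal{E}^{\alpha,\beta}(F)$ for all AFs $F$. *)

theory Defs
  imports Main
begin

type_synonym 'a af = "'a set \<times> ('a \<times> 'a) set"

definition is_AF :: "'a af \<Rightarrow> bool" where
  "is_AF F \<longleftrightarrow> finite (fst F) \<and> snd F \<subseteq> fst F \<times> fst F"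

definition plus_set :: "'a af \<Rightarrow> 'a set \<Rightarrow> 'a set" where
  "plus_set F S = {a. \<exists>b\<in>S. (b, a) \<in> snd F}"

definition minus_set :: "'a af \<Rightarrow> 'a set \<Rightarrow> 'a set" where
  "minus_set F S = {a. \<exists>b\<in>S. (a, b) \<in> snd F}"

definition attacks_set :: "'a af \<Rightarrow> 'a set \<Rightarrow> 'a set \<Rightarrow> bool" where
  "attacks_set F S S' \<longleftrightarrow> plus_set F S \<inter> S' \<noteq> {}"

definition conflict_free :: "'a af \<Rightarrow> 'a set \<Rightarrow> bool" where
  "conflict_free F S \<longleftrightarrow> (\<forall>a\<in>S. \<forall>b\<in>S. (a, b) \<notin> snd F)"

definition admissible :: "'a af \<Rightarrow> 'a set \<Rightarrow> bool" where
  "admissible F S \<longleftrightarrow> S \<subseteq> fst F \<and> conflict_free F S \<and>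
     (\<forall>a\<in>S. \<forall>b. (b, a) \<in> snd F \<longrightarrow> (\<exists>c\<in>S. (c, b) \<in> snd F))"

definition sst :: "'a af \<Rightarrow> 'a set set" where
  "sst F = {E. admissible F E \<and>
     (\<forall>E'. admissible F E' \<longrightarrow> \<not> (E \<union> plus_set F E \<subset> E' \<union> plus_set F E'))}"

definition IS :: "'a af \<Rightarrow> 'a set set" where
  "IS F = {S. S \<noteq> {} \<and> admissible F S \<and>
     (\<forall>S'. S' \<noteq> {} \<and> S' \<subset> S \<longrightarrow> \<not> admissible F S')}"

definition IS_u :: "'a af \<Rightarrow> 'a set set" where
  "IS_u F = {S \<in> IS F. minus_set F S = {}}"

definition IS_uc :: "'a af \<Rightarrow> 'a set set" where
  "IS_uc F = {S \<in> IS F. minus_set F S \<noteq> {} \<and> \<not> (\<exists>S'\<in>IS F. attacks_set F S' S)}"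

definition IS_c :: "'a af \<Rightarrow> 'a set set" where
  "IS_c F = {S \<in> IS F. \<exists>S'\<in>IS F. attacks_set F S' S}"

definition reduct :: "'a af \<Rightarrow> 'a set \<Rightarrow> 'a af" where
  "reduct F S = (let A' = fst F - (S \<union> plus_set F S) in (A', snd F \<inter> (A' \<times> A')))"

type_synonym 'a selection = "'a set set \<Rightarrow> 'a set set \<Rightarrow> 'a set set \<Rightarrow> 'a set set"

definition is_selection :: "'a selection \<Rightarrow> bool" where
  "is_selection \<alpha> \<longleftrightarrow> (\<forall>X Y Z. \<alpha> X Y Z \<subseteq> X \<union> Y \<union> Z)"

inductive reach :: "'a selection \<Rightarrow> 'a af \<Rightarrow> 'a set \<Rightarrow> 'a af \<Rightarrow> 'a set \<Rightarrow> bool"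
  for \<alpha> where
  refl: "reach \<alpha> F S F S"
| step: "S' \<in> \<alpha> (IS_u F) (IS_uc F) (IS_c F) \<Longrightarrow> reach \<alpha> (reduct F S') (S \<union> S') F'' S''
          \<Longrightarrow> reach \<alpha> F S F'' S''"

text \<open>Termination functions are rendered as boolean-valued (1 = True).\<close>
definition ext_ser :: "'a selection \<Rightarrow> ('a af \<Rightarrow> 'a set \<Rightarrow> bool) \<Rightarrow> 'a af \<Rightarrow> 'a set set" where
  "ext_ser \<alpha> \<beta> F = {S. \<exists>F'. reach \<alpha> F {} F' S \<and> \<beta> F' S}"

definition serialisable :: "('a af \<Rightarrow> 'a set set) \<Rightarrow> bool" where
  "serialisable \<sigma> \<longleftrightarrow> (\<exists>\<alpha> \<beta>. is_selection \<alpha> \<and> (\<forall>F. is_AF F \<longrightarrow> \<sigma> F = ext_ser \<alpha> \<beta> F))"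

end

theory Submission
  imports Defs
begin

text \<open>Let a and b attack each other and let c attack itself, and compare the framework in
which c is isolated with the one in which b additionally attacks c. Both have exactly the
initial sets {a} and {b}, each challenged by the other, and removing {a} leaves the same
reduct, the lone self-attacker c. Since a serialisation only ever adds arguments, a derivation
of {a} must start by selecting {a}, after which the two frameworks are indistinguishable; so a
serialisation produces {a} in both or in neither. But {a} is semi-stable when c is isolated,
while with b attacking c the extension {b} covers strictly more.\<close>

lemma reach_subset:
  assumes "reach \<alpha> F S F' S'"
  shows "S \<subseteq> S'"
  using assms by induction auto

lemma ext_ser_transfer:
  assumes IS_eq: "IS_u F = IS_u G" "IS_uc F = IS_uc G" "IS_c F = IS_c G"
    and reduct_eq: "\<And>T. T \<in> \<alpha> (IS_u G) (IS_uc G) (IS_c G) \<Longrightarrow> T \<subseteq> E \<Longrightarrow>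
      reduct F T = reduct G T"
    and E: "E \<in> ext_ser \<alpha> \<beta> G" "E \<noteq> {}"
  shows "E \<in> ext_ser \<alpha> \<beta> F"
proof -
  from E obtain G' where reach: "reach \<alpha> G {} G' E" and "\<beta> G' E"
    unfolding ext_ser_def by blast
  from reach have "reach \<alpha> F {} G' E"
  proof cases
    case refl
    with \<open>E \<noteq> {}\<close> show ?thesis by simp
  next
    case (step T)
    then have "reduct F T = reduct G T"
      using reduct_eq reach_subset by fastforce
    with step IS_eq show ?thesis
      by (metis reach.step)
  qed
  with \<open>\<beta> G' E\<close> show ?thesis
    unfolding ext_ser_def by blast
qed

locale loop_af =
  fixes a b c :: 'a and R :: "('a \<times> 'a) set"
  assumes distinct: "a \<noteq> b" "a \<noteq> c" "b \<noteq> c"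
    and attacks_lower: "{(a, b), (b, a), (c, c)} \<subseteq> R"
    and attacks_upper: "R \<subseteq> {(a, b), (b, a), (b, c), (c, c)}"
begin

abbreviation F :: "'a af" where "F \<equiv> ({a, b, c}, R)"

lemma is_AF: "is_AF F"
  using attacks_upper unfolding is_AF_def by auto

lemma admissible_iff: "admissible F S \<longleftrightarrow> S = {} \<or> S = {a} \<or> S = {b}"
proof
  assume "admissible F S"
  then have "S \<subseteq> {a, b, c}" "c \<notin> S" "\<not> (a \<in> S \<and> b \<in> S)"
    using attacks_lower attacks_upper unfolding admissible_def conflict_free_def by auto
  then show "S = {} \<or> S = {a} \<or> S = {b}" by blast
qed (use distinct attacks_lower attacks_upper in \<open>auto simp: admissible_def conflict_free_def\<close>)

lemma IS_eq: "IS F = {{a}, {b}}"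
  unfolding IS_def admissible_iff using distinct by auto

lemma IS_u_empty: "IS_u F = {}"
  and IS_uc_empty: "IS_uc F = {}"
  and IS_c_eq: "IS_c F = {{a}, {b}}"
  using attacks_lower
  by (auto simp: IS_u_def IS_uc_def IS_c_def IS_eq minus_set_def attacks_set_def plus_set_def)

lemma plus_set_a: "plus_set F {a} = {b}"
  using attacks_lower attacks_upper distinct unfolding plus_set_def by auto

lemma reduct_a: "reduct F {a} = ({c}, {(c, c)})"
  using attacks_lower attacks_upper distinct unfolding reduct_def Let_def plus_set_a by auto

lemma a_in_sst_if_b_not_attacks_c:
  assumes "(b, c) \<notin> R"
  shows "{a} \<in> sst F"
proof -
  have "E \<union> plus_set F E \<subseteq> {a} \<union> plus_set F {a}" if "admissible F E" for E
  proof -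
    have "c \<notin> E"
      using that distinct unfolding admissible_iff by auto
    then have "plus_set F E \<subseteq> {a, b}"
      using assms attacks_upper unfolding plus_set_def by auto
    with that show ?thesis
      unfolding admissible_iff plus_set_a by auto
  qed
  then show ?thesis
    unfolding sst_def using admissible_iff by blast
qed

lemma a_notin_sst_if_b_attacks_c:
  assumes "(b, c) \<in> R"
  shows "{a} \<notin> sst F"
proof -
  have "plus_set F {b} = {a, c}"
    using assms attacks_lower attacks_upper distinct unfolding plus_set_def by auto
  then have "{a} \<union> plus_set F {a} \<subset> {b} \<union> plus_set F {b}"
    using distinct unfolding plus_set_a by auto
  then show ?thesis
    unfolding sst_def admissible_iff by blast
qed

end

lemma singleton_ext_ser_loop_af_transfer:
  assumes "loop_af a b c R" "loop_af a b c R'" "is_selection \<alpha>"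
    and "{a} \<in> ext_ser \<alpha> \<beta> ({a, b, c}, R)"
  shows "{a} \<in> ext_ser \<alpha> \<beta> ({a, b, c}, R')"
proof (rule ext_ser_transfer)
  interpret G: loop_af a b c R by fact
  interpret F: loop_af a b c R' by fact
  show "IS_u F.F = IS_u G.F" "IS_uc F.F = IS_uc G.F" "IS_c F.F = IS_c G.F"
    by (simp_all only: F.IS_u_empty F.IS_uc_empty F.IS_c_eq G.IS_u_empty G.IS_uc_empty G.IS_c_eq)
  show "reduct F.F T = reduct G.F T"
    if "T \<in> \<alpha> (IS_u G.F) (IS_uc G.F) (IS_c G.F)" "T \<subseteq> {a}" for T
  proof -
    have "T = {a}"
      using that \<open>is_selection \<alpha>\<close> G.distinct
      unfolding is_selection_def G.IS_u_empty G.IS_uc_empty G.IS_c_eq by blast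
    then show ?thesis
      by (simp only: F.reduct_a G.reduct_a)
  qed
qed (use assms in simp_all)

theorem theorem9:
  assumes "infinite (UNIV :: 'a set)"
  shows "\<not> serialisable (sst :: 'a af \<Rightarrow> 'a set set)"
proof
  assume "serialisable (sst :: 'a af \<Rightarrow> 'a set set)"
  then obtain \<alpha> \<beta> where sel: "is_selection \<alpha>"
    and sst_eq: "\<And>F :: 'a af. is_AF F \<Longrightarrow> sst F = ext_ser \<alpha> \<beta> F"
    unfolding serialisable_def by blast
  obtain a b c :: 'a where distinct: "a \<noteq> b" "a \<noteq> c" "b \<noteq> c"
    using infinite_arbitrarily_large[OF assms, of 3] by (auto simp: card_3_iff)
  define R where "R = {(a, b), (b, a), (c, c)}"
  interpret isolated: loop_af a b c R
    by unfold_locales (use distinct in \<open>auto simp: R_def\<close>)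
  interpret attacked: loop_af a b c "insert (b, c) R"
    by unfold_locales (use distinct in \<open>auto simp: R_def\<close>)
  have "(b, c) \<notin> R"
    using distinct by (simp add: R_def)
  then have "{a} \<in> ext_ser \<alpha> \<beta> isolated.F"
    using isolated.a_in_sst_if_b_not_attacks_c sst_eq[OF isolated.is_AF] by simp
  then have "{a} \<in> ext_ser \<alpha> \<beta> attacked.F"
    by (rule singleton_ext_ser_loop_af_transfer[OF isolated.loop_af_axioms attacked.loop_af_axioms sel])
  then have "{a} \<in> sst attacked.F"
    using sst_eq[OF attacked.is_AF] by simp
  with attacked.a_notin_sst_if_b_attacks_c show False by simp
qed

end
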